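(* If $G$ is a connected graph, then $\mathrm{id}^{\leq 3}(G)\leq \left\lceil \frac{3|E(G)|}{4}\right\rceil$.
   Context: All graphs are finite and simple. For an oriented graph $D$ and a set $X\subseteq V(D)$, the inversion of $X$ reverses the orientation of every arc with both endvertices in $X$. For an integer $p\ge 2$, a $(\leq p)$-inversion is the inversion of a set of at most $p$ vertices. For a graph $G$, $\mathrm{id}^{\leq p}(G)$ (the $(\leq p)$-inversion diameter) is the maximum, over all ordered pairs $(\vec G_1,\vec G_2)$ of orientations of $G$ (on the same labelled vertex set), of the minimum number of $(\leq p)$-inversions whose successive application transforms $\vec G_1$ into $\vec G_2$. *)

theory Defs
  imports Complex_Main
begin

definition simple_graph :: "'a set \<Rightarrow> 'a set set \<Rightarrow> bool" where
  "simple_graph V E \<longleftrightarrow> finite V \<and>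
     (\<forall>e\<in>E. \<exists>u v. e = {u, v} \<and> u \<noteq> v \<and> u \<in> V \<and> v \<in> V)"

definition adj_rel :: "'a set set \<Rightarrow> ('a \<times> 'a) set" where
  "adj_rel E = {(u, v). {u, v} \<in> E}"

definition connected_graph :: "'a set \<Rightarrow> 'a set set \<Rightarrow> bool" where
  "connected_graph V E \<longleftrightarrow> simple_graph V E \<and>
     (\<forall>u\<in>V. \<forall>v\<in>V. (u, v) \<in> (adj_rel E)\<^sup>*)"

definition orientation :: "'a set set \<Rightarrow> ('a \<times> 'a) set \<Rightarrow> bool" where
  "orientation E D \<longleftrightarrow> (\<forall>(u, v)\<in>D. {u, v} \<in> E) \<and>
     (\<forall>u v. {u, v} \<in> E \<and> u \<noteq> v \<longrightarrow> ((u, v) \<in> D \<longleftrightarrow> (v, u) \<notin> D))"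

definition invert :: "('a \<times> 'a) set \<Rightarrow> 'a set \<Rightarrow> ('a \<times> 'a) set" where
  "invert D X = {(u, v). (u, v) \<in> D \<and> \<not> (u \<in> X \<and> v \<in> X)} \<union>
                {(v, u) | u v. (u, v) \<in> D \<and> u \<in> X \<and> v \<in> X}"

definition transformable :: "nat \<Rightarrow> 'a set \<Rightarrow> ('a \<times> 'a) set \<Rightarrow> ('a \<times> 'a) set \<Rightarrow> nat \<Rightarrow> bool" where
  "transformable p V D1 D2 k \<longleftrightarrow> (\<exists>Xs. length Xs = k \<and>
     (\<forall>X\<in>set Xs. X \<subseteq> V \<and> card X \<le> p) \<and> foldl invert D1 Xs = D2)"

definition inv_dist :: "nat \<Rightarrow> 'a set \<Rightarrow> ('a \<times> 'a) set \<Rightarrow> ('a \<times> 'a) set \<Rightarrow> nat" where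
  "inv_dist p V D1 D2 = (LEAST k. transformable p V D1 D2 k)"

definition inv_diam :: "nat \<Rightarrow> 'a set \<Rightarrow> 'a set set \<Rightarrow> nat" where
  "inv_diam p V E = Max {inv_dist p V D1 D2 | D1 D2. orientation E D1 \<and> orientation E D2}"

end

theory Submission
  imports Defs
begin

(* Inverting X reverses exactly the edges inside X, so a sequence of inversions turns D1 into D2
   iff the edges on which D1 and D2 differ are exactly those lying inside an odd number of the
   inverted sets.

   Reversing the edges of a path changes the parity of the in-degree exactly at its two ends, so a
   connected graph has an orientation with at most one vertex of odd in-degree.  Pairing up the
   in-edges at every vertex v into triples {v, x, y} yields t triples covering all but u <= 1 edges,
   with 2t + u <= |E|.

   To realise a set F of edges, treat the triples one by one: either skip Q, or invert Q and go on
   with F xor E[Q]; edges left over at the end are inverted one at a time.  Averaging over the two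
   alternatives for each triple gives a sequence of length at most (t + |C| + 2 |F - C|) / 2,
   C being the set of covered edges; this is at most (3|E| + 1) / 4. *)

lemma simple_graph_finite_edges:
  assumes "simple_graph V E"
  shows "finite E"
proof -
  have "E \<subseteq> Pow V"
    using assms unfolding simple_graph_def by auto
  then show ?thesis
    using assms unfolding simple_graph_def by (meson finite_Pow_iff finite_subset)
qed

lemma simple_graph_edgeE:
  assumes "simple_graph V E" "e \<in> E"
  obtains u v where "e = {u, v}" "u \<noteq> v" "u \<in> V" "v \<in> V"
  using assms unfolding simple_graph_def by blast

lemma simple_graph_doubleton_neq:
  assumes "simple_graph V E" "{u, v} \<in> E"
  shows "u \<noteq> v"
  using assms by (elim simple_graph_edgeE) (auto simp: doubleton_eq_iff)

lemma simple_graph_edge_at: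
  assumes "simple_graph V E" "e \<in> E" "v \<in> e"
  shows "\<exists>x \<in> V. e = {v, x}"
proof -
  obtain a b where "e = {a, b}" "a \<in> V" "b \<in> V"
    using assms(1,2) by (rule simple_graph_edgeE)
  with assms(3) show ?thesis
    by (metis insert_commute insertE singletonD)
qed

lemma simple_graph_edge_subset:
  assumes "simple_graph V E" "e \<in> E"
  shows "e \<subseteq> V"
  using assms by (elim simple_graph_edgeE) auto

definition flip_arcs :: "('a \<times> 'a) set \<Rightarrow> 'a set set \<Rightarrow> ('a \<times> 'a) set" where
  "flip_arcs D F = {(u, v). ((u, v) \<in> D \<and> {u, v} \<notin> F) \<or> ((v, u) \<in> D \<and> {u, v} \<in> F)}"

definition edges_in :: "'a set set \<Rightarrow> 'a set \<Rightarrow> 'a set set" where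
  "edges_in E X = {e \<in> E. e \<subseteq> X}"

fun inverted_edges :: "'a set set \<Rightarrow> 'a set list \<Rightarrow> 'a set set" where
  "inverted_edges E [] = {}"
| "inverted_edges E (X # Xs) = sym_diff (edges_in E X) (inverted_edges E Xs)"

lemma invert_eq_flip_arcs:
  assumes "\<forall>(u, v) \<in> D. {u, v} \<in> E"
  shows "invert D X = flip_arcs D (edges_in E X)"
  using assms unfolding invert_def flip_arcs_def edges_in_def by (auto simp: insert_commute)

lemma flip_arcs_flip_arcs: "flip_arcs (flip_arcs D F) G = flip_arcs D (sym_diff F G)"
  unfolding flip_arcs_def by (auto simp: insert_commute)

lemma flip_arcs_edges:
  assumes "\<forall>(u, v) \<in> D. {u, v} \<in> E"
  shows "\<forall>(u, v) \<in> flip_arcs D F. {u, v} \<in> E"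
  using assms unfolding flip_arcs_def by (auto simp: insert_commute)

lemma foldl_invert_eq_flip_arcs:
  assumes "\<forall>(u, v) \<in> D. {u, v} \<in> E"
  shows "foldl invert D Xs = flip_arcs D (inverted_edges E Xs)"
  using assms
proof (induction Xs arbitrary: D)
  case Nil
  then show ?case by (simp add: flip_arcs_def)
next
  case (Cons X Xs)
  have "foldl invert D (X # Xs) = foldl invert (flip_arcs D (edges_in E X)) Xs"
    using invert_eq_flip_arcs[OF Cons.prems] by simp
  also have "\<dots> = flip_arcs (flip_arcs D (edges_in E X)) (inverted_edges E Xs)"
    using Cons.IH flip_arcs_edges[OF Cons.prems] by blast
  finally show ?case by (simp add: flip_arcs_flip_arcs)
qed

lemma orientation_eq_flip_arcs:
  assumes "simple_graph V E" "orientation E D1" "orientation E D2"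
  shows "D2 = flip_arcs D1 {{u, v} | u v. (u, v) \<in> D1 \<and> (u, v) \<notin> D2}"
proof (intro set_eqI, clarify)
  fix u v
  let ?F = "{{u, v} | u v. (u, v) \<in> D1 \<and> (u, v) \<notin> D2}"
  show "(u, v) \<in> D2 \<longleftrightarrow> (u, v) \<in> flip_arcs D1 ?F"
  proof (cases "{u, v} \<in> E")
    case False
    moreover have "\<forall>(x, y) \<in> D1. {x, y} \<in> E" "\<forall>(x, y) \<in> D2. {x, y} \<in> E"
      using assms(2,3) unfolding orientation_def by blast+
    ultimately have "(u, v) \<notin> D1" "(v, u) \<notin> D1" "(u, v) \<notin> D2"
      by (auto simp: insert_commute)
    then show ?thesis unfolding flip_arcs_def by simp
  next
    case True
    then have uv: "u \<noteq> v" using simple_graph_doubleton_neq[OF assms(1)] by blast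
    have "(u, v) \<in> D1 \<longleftrightarrow> (v, u) \<notin> D1" "(u, v) \<in> D2 \<longleftrightarrow> (v, u) \<notin> D2"
      using assms(2,3) True uv unfolding orientation_def by blast+
    moreover have "{u, v} \<in> ?F \<longleftrightarrow> ((u, v) \<in> D1 \<and> (u, v) \<notin> D2) \<or> ((v, u) \<in> D1 \<and> (v, u) \<notin> D2)"
      using uv by (auto simp: doubleton_eq_iff)
    ultimately show ?thesis unfolding flip_arcs_def by auto
  qed
qed

lemma orientation_of_head_map:
  assumes "\<forall>e \<in> E. h e \<in> e"
  shows "orientation E {(u, v). {u, v} \<in> E \<and> h {u, v} = v}"
  unfolding orientation_def
proof (intro conjI allI impI)
  fix u v assume uv: "{u, v} \<in> E \<and> u \<noteq> v"
  then have "h {u, v} \<in> {u, v}" using assms by blast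
  then show "(u, v) \<in> {(u, v). {u, v} \<in> E \<and> h {u, v} = v} \<longleftrightarrow>
             (v, u) \<notin> {(u, v). {u, v} \<in> E \<and> h {u, v} = v}"
    using uv by (auto simp: insert_commute)
qed auto

lemma simple_graph_head_map_exists:
  assumes "simple_graph V E"
  shows "\<exists>h. \<forall>e \<in> E. h e \<in> e"
proof -
  have "\<forall>e \<in> E. \<exists>w. w \<in> e"
    using assms by (blast elim: simple_graph_edgeE)
  then show ?thesis by (rule bchoice)
qed

definition inversion_sets :: "nat \<Rightarrow> 'a set \<Rightarrow> 'a set set" where
  "inversion_sets p V = {X. X \<subseteq> V \<and> card X \<le> p}"

definition covered_edges :: "'a set set \<Rightarrow> 'a set set \<Rightarrow> 'a set set" where
  "covered_edges E Os = {e \<in> E. \<exists>Q \<in> Os. e \<subseteq> Q}"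

lemma edges_in_edge:
  assumes "simple_graph V E" "e \<in> E"
  shows "edges_in E e = {e}"
proof -
  have "e' = e" if e': "e' \<in> E" and sub: "e' \<subseteq> e" for e'
  proof -
    obtain u v where "e = {u, v}" using assms by (rule simple_graph_edgeE)
    moreover obtain x y where "e' = {x, y}" "x \<noteq> y" using assms(1) e' by (rule simple_graph_edgeE)
    ultimately show ?thesis using sub by auto
  qed
  then show ?thesis
    using assms(2) unfolding edges_in_def by blast
qed

lemma inverted_edges_distinct_edges:
  assumes "simple_graph V E" "set xs \<subseteq> E" "distinct xs"
  shows "inverted_edges E xs = set xs"
  using assms(2,3)
  by (induction xs) (auto simp: edges_in_edge[OF assms(1)])

lemma realize_edge_set_by_edges:
  assumes "simple_graph V E" "2 \<le> p" "F \<subseteq> E"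
  shows "\<exists>Xs. set Xs \<subseteq> inversion_sets p V \<and> inverted_edges E Xs = F \<and> length Xs = card F"
proof -
  have "finite F"
    using assms(1,3) simple_graph_finite_edges finite_subset by blast
  then obtain xs where xs: "set xs = F" "distinct xs"
    using finite_distinct_list by blast
  have "F \<subseteq> inversion_sets p V"
    using assms unfolding inversion_sets_def by (auto elim!: simple_graph_edgeE)
  then show ?thesis
    using xs assms inverted_edges_distinct_edges distinct_card by metis
qed

lemma card_diff_sym_diff:
  assumes "finite F" "finite T"
  shows "card (F - C) + card (sym_diff F T - C) = card (T - C) + 2 * card (F - (C \<union> T))"
proof -
  have parts: "(F - C) \<inter> T = (T - C) \<inter> F" "(F - C) - T = F - (C \<union> T)"
    "(sym_diff F T - C) \<inter> F = F - (C \<union> T)" "(sym_diff F T - C) - F = (T - C) - F"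
    by auto
  have "card (F - C) = card ((T - C) \<inter> F) + card (F - (C \<union> T))"
    using card_Int_Diff[of "F - C" T, unfolded parts] assms by simp
  moreover have "card (sym_diff F T - C) = card (F - (C \<union> T)) + card ((T - C) - F)"
    using card_Int_Diff[of "sym_diff F T - C" F, unfolded parts] assms by simp
  moreover have "card (T - C) = card ((T - C) \<inter> F) + card ((T - C) - F)"
    using card_Int_Diff[of "T - C" F] assms by simp
  ultimately show ?thesis by simp
qed

lemma realize_edge_set_averaging:
  assumes "simple_graph V E" "2 \<le> p" "finite Os" "Os \<subseteq> inversion_sets p V" "F \<subseteq> E"
  shows "\<exists>Xs. set Xs \<subseteq> inversion_sets p V \<and> inverted_edges E Xs = F \<and>
    2 * length Xs \<le> card Os + card (covered_edges E Os) + 2 * card (F - covered_edges E Os)"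
  using assms(3-5)
proof (induction Os arbitrary: F rule: finite_induct)
  case empty
  obtain Xs where "set Xs \<subseteq> inversion_sets p V" "inverted_edges E Xs = F" "length Xs = card F"
    using realize_edge_set_by_edges[OF assms(1,2) empty.prems(2)] by blast
  moreover have "covered_edges E {} = {}"
    unfolding covered_edges_def by simp
  ultimately show ?case by auto
next
  case (insert Q Os)
  let ?T = "edges_in E Q"
  let ?C = "covered_edges E Os"
  have "?C \<subseteq> E" "?T \<subseteq> E"
    unfolding covered_edges_def edges_in_def by auto
  then have fin: "finite ?C" "finite ?T" "finite F"
    using simple_graph_finite_edges[OF assms(1)] insert.prems(2) by (auto intro: finite_subset)
  have IH: "\<exists>Xs. set Xs \<subseteq> inversion_sets p V \<and> inverted_edges E Xs = F' \<and>
      2 * length Xs \<le> card Os + card ?C + 2 * card (F' - ?C)" if "F' \<subseteq> E" for F'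
    using insert.IH insert.prems(1) that by blast
  obtain Xs1 where Xs1: "set Xs1 \<subseteq> inversion_sets p V" "inverted_edges E Xs1 = F"
      "2 * length Xs1 \<le> card Os + card ?C + 2 * card (F - ?C)"
    using IH[OF insert.prems(2)] by blast
  have "sym_diff F ?T \<subseteq> E"
    using insert.prems(2) unfolding edges_in_def by blast
  then obtain Xs2 where Xs2: "set Xs2 \<subseteq> inversion_sets p V" "inverted_edges E Xs2 = sym_diff F ?T"
      "2 * length Xs2 \<le> card Os + card ?C + 2 * card (sym_diff F ?T - ?C)"
    using IH by blast
  have "Q \<in> inversion_sets p V"
    using insert.prems(1) by blast
  moreover have "inverted_edges E (Q # Xs2) = F"
    using Xs2(2) by auto
  ultimately have Q_Xs2: "set (Q # Xs2) \<subseteq> inversion_sets p V" "inverted_edges E (Q # Xs2) = F"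
    using Xs2(1) by auto
  have cov: "covered_edges E (insert Q Os) = ?C \<union> ?T"
    unfolding covered_edges_def edges_in_def by auto
  have "card (?C \<union> ?T) = card ?C + card (?T - ?C)"
    using card_Un_disjoint[of ?C "?T - ?C"] fin by simp
  moreover have "card (F - ?C) + card (sym_diff F ?T - ?C) = card (?T - ?C) + 2 * card (F - (?C \<union> ?T))"
    using card_diff_sym_diff[OF fin(3,2)] .
  ultimately have sum: "length Xs1 + length (Q # Xs2) \<le> card (insert Q Os) +
      card (covered_edges E (insert Q Os)) + 2 * card (F - covered_edges E (insert Q Os))"
    using Xs1(3) Xs2(3) insert.hyps unfolding cov by simp
  \<comment> \<open>the shorter of the two sequences is at most their average\<close>
  show ?case
  proof (cases "length Xs1 \<le> length (Q # Xs2)")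
    case True
    with sum Xs1 show ?thesis by (intro exI[of _ Xs1]) auto
  next
    case False
    with sum Q_Xs2 show ?thesis by (intro exI[of _ "Q # Xs2"]) auto
  qed
qed

text \<open>An orientation of \<open>E\<close> is represented by its head map \<open>h\<close>, with \<open>h e \<in> e\<close>.\<close>

definition indeg :: "'a set set \<Rightarrow> ('a set \<Rightarrow> 'a) \<Rightarrow> 'a \<Rightarrow> nat" where
  "indeg E h v = card {e \<in> E. h e = v}"

lemma odd_card_sym_diff_singleton:
  assumes "finite S"
  shows "odd (card (sym_diff S {x})) \<longleftrightarrow> even (card S)"
proof (cases "x \<in> S")
  case True
  then have "sym_diff S {x} = S - {x}" by auto
  with True assms show ?thesis
    by (simp add: card_Diff_singleton) (metis card_0_eq empty_iff even_Suc Suc_pred neq0_conv)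
next
  case False
  then have "sym_diff S {x} = insert x S" by auto
  with False assms show ?thesis by simp
qed

lemma rtrancl_adj_rel_parity_edge_set:
  assumes "(a, b) \<in> (adj_rel E)\<^sup>*" "simple_graph V E"
  shows "\<exists>W \<subseteq> E. \<forall>v. odd (card {e \<in> W. v \<in> e}) \<longleftrightarrow> (v = a) \<noteq> (v = b)"
  using assms(1)
proof (induction rule: rtrancl_induct)
  case base
  show ?case by (intro exI[of _ "{}"]) simp
next
  case (step b c)
  then obtain W where W: "W \<subseteq> E" "\<forall>v. odd (card {e \<in> W. v \<in> e}) \<longleftrightarrow> (v = a) \<noteq> (v = b)"
    by blast
  have bc: "{b, c} \<in> E" using step.hyps(2) unfolding adj_rel_def by simp
  then have "b \<noteq> c" by (rule simple_graph_doubleton_neq[OF assms(2)])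
  have fin: "finite W"
    using W(1) simple_graph_finite_edges[OF assms(2)] finite_subset by blast
  let ?W = "sym_diff W {{b, c}}"
  have "odd (card {e \<in> ?W. v \<in> e}) \<longleftrightarrow> (v = a) \<noteq> (v = c)" for v
  proof (cases "v = b \<or> v = c")
    case True
    then have "{e \<in> ?W. v \<in> e} = sym_diff {e \<in> W. v \<in> e} {{b, c}}" by auto
    then have "odd (card {e \<in> ?W. v \<in> e}) \<longleftrightarrow> even (card {e \<in> W. v \<in> e})"
      using odd_card_sym_diff_singleton[of "{e \<in> W. v \<in> e}" "{b, c}"] fin by simp
    then show ?thesis using W(2) True \<open>b \<noteq> c\<close> by auto
  next
    case False
    then have "{e \<in> ?W. v \<in> e} = {e \<in> W. v \<in> e}" by auto
    then show ?thesis using W(2) False by auto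
  qed
  moreover have "?W \<subseteq> E" using W(1) bc by auto
  ultimately show ?case by blast
qed

lemma indeg_reverse_parity:
  assumes "simple_graph V E" "\<forall>e \<in> E. h e \<in> e" "\<forall>e \<in> E. g e \<in> e \<and> g e \<noteq> h e" "W \<subseteq> E"
  shows "odd (indeg E (\<lambda>e. if e \<in> W then g e else h e) v) \<longleftrightarrow>
         odd (indeg E h v) \<noteq> odd (card {e \<in> W. v \<in> e})"
proof -
  let ?h' = "\<lambda>e. if e \<in> W then g e else h e"
  have fin: "finite X" if "X \<subseteq> E" for X
    using simple_graph_finite_edges[OF assms(1)] that finite_subset by blast
  have split1: "{e \<in> E. ?h' e = v} = {e \<in> E - W. h e = v} \<union> {e \<in> W. g e = v}"
    and split2: "{e \<in> E. h e = v} = {e \<in> E - W. h e = v} \<union> {e \<in> W. h e = v}"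
    using assms(4) by auto
  have c1: "indeg E ?h' v = card {e \<in> E - W. h e = v} + card {e \<in> W. g e = v}"
    unfolding indeg_def split1 by (rule card_Un_disjoint) (use assms(4) in \<open>auto intro: fin\<close>)
  have c2: "indeg E h v = card {e \<in> E - W. h e = v} + card {e \<in> W. h e = v}"
    unfolding indeg_def split2 by (rule card_Un_disjoint) (use assms(4) in \<open>auto intro: fin\<close>)
  have "v \<in> e \<longleftrightarrow> h e = v \<or> g e = v" if eW: "e \<in> W" for e
  proof -
    have "e \<in> E" using eW assms(4) by blast
    then have "h e \<in> e" "g e \<in> e" "g e \<noteq> h e"
      using assms(2,3) by auto
    moreover obtain x y where "e = {x, y}"
      using assms(1) \<open>e \<in> E\<close> by (rule simple_graph_edgeE)
    ultimately show ?thesis by auto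
  qed
  then have split3: "{e \<in> W. v \<in> e} = {e \<in> W. h e = v} \<union> {e \<in> W. g e = v}"
    by auto
  have c3: "card {e \<in> W. v \<in> e} = card {e \<in> W. h e = v} + card {e \<in> W. g e = v}"
    unfolding split3 by (rule card_Un_disjoint) (use assms(3,4) in \<open>auto intro: fin\<close>)
  have "indeg E ?h' v + 2 * card {e \<in> W. h e = v} = indeg E h v + card {e \<in> W. v \<in> e}"
    using c1 c2 c3 by simp
  from arg_cong[where f = even, OF this] show ?thesis
    by simp
qed

lemma reverse_along_path_parity:
  assumes "connected_graph V E" "\<forall>e \<in> E. h e \<in> e" "a \<in> V" "b \<in> V" "a \<noteq> b"
  shows "\<exists>h'. (\<forall>e \<in> E. h' e \<in> e) \<and>
    {v \<in> V. odd (indeg E h' v)} = sym_diff {v \<in> V. odd (indeg E h v)} {a, b}"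
proof -
  have sg: "simple_graph V E" and path: "(a, b) \<in> (adj_rel E)\<^sup>*"
    using assms(1,3,4) unfolding connected_graph_def by blast+
  obtain W where W: "W \<subseteq> E" "\<forall>v. odd (card {e \<in> W. v \<in> e}) \<longleftrightarrow> (v = a) \<noteq> (v = b)"
    using rtrancl_adj_rel_parity_edge_set[OF path sg] by blast
  have other: "\<forall>e \<in> E. \<exists>w. w \<in> e \<and> w \<noteq> h e"
  proof
    fix e assume "e \<in> E"
    then obtain x y where "e = {x, y}" "x \<noteq> y"
      using sg by (elim simple_graph_edgeE) blast
    then show "\<exists>w. w \<in> e \<and> w \<noteq> h e"
      by (cases "h e = x") auto
  qed
  obtain g where g: "\<forall>e \<in> E. g e \<in> e \<and> g e \<noteq> h e"
    using bchoice[OF other] by blast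
  let ?h' = "\<lambda>e. if e \<in> W then g e else h e"
  have "\<forall>e \<in> E. ?h' e \<in> e"
    using assms(2) g by auto
  moreover have "odd (indeg E ?h' v) \<longleftrightarrow> odd (indeg E h v) \<noteq> ((v = a) \<noteq> (v = b))" for v
    using indeg_reverse_parity[OF sg assms(2) g W(1), of v] W(2) by simp
  ultimately show ?thesis
    using assms(3-5) by (intro exI[of _ ?h']) auto
qed

lemma head_map_odd_indeg_le_1:
  assumes "connected_graph V E"
  shows "\<exists>h. (\<forall>e \<in> E. h e \<in> e) \<and> card {v \<in> V. odd (indeg E h v)} \<le> 1"
proof -
  have sg: "simple_graph V E"
    using assms unfolding connected_graph_def by blast
  have "\<exists>h'. (\<forall>e \<in> E. h' e \<in> e) \<and> card {v \<in> V. odd (indeg E h' v)} \<le> 1"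
    if "\<forall>e \<in> E. h e \<in> e" for h
    using that
  proof (induction "card {v \<in> V. odd (indeg E h v)}" arbitrary: h rule: less_induct)
    case less
    let ?S = "{v \<in> V. odd (indeg E h v)}"
    have fin: "finite ?S"
      using sg unfolding simple_graph_def by simp
    show ?case
    proof (cases "card ?S \<le> 1")
      case True
      with less.prems show ?thesis by blast
    next
      case False
      then obtain a b where ab: "a \<in> ?S" "b \<in> ?S" "a \<noteq> b"
        using card_le_Suc0_iff_eq[OF fin] by auto
      then obtain h' where h': "\<forall>e \<in> E. h' e \<in> e"
          "{v \<in> V. odd (indeg E h' v)} = sym_diff ?S {a, b}"
        using reverse_along_path_parity[OF assms less.prems] by blast
      have "sym_diff ?S {a, b} = ?S - {a, b}"
        using ab by auto
      then have "card {v \<in> V. odd (indeg E h' v)} < card ?S"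
        using h'(2) ab fin False by (simp add: card_Diff_subset)
      with h'(1) show ?thesis
        using less.hyps by blast
    qed
  qed
  with simple_graph_head_map_exists[OF sg] show ?thesis
    by blast
qed

lemma star_triangle_cover:
  assumes "finite A" "v \<in> V" "\<forall>e \<in> A. \<exists>x \<in> V. e = {v, x}"
  shows "\<exists>Os. finite Os \<and> Os \<subseteq> inversion_sets 3 V \<and> 2 * card Os + card A mod 2 \<le> card A \<and>
    card (A - covered_edges A Os) \<le> card A mod 2"
  using assms(1,3)
proof (induction "card A" arbitrary: A rule: less_induct)
  case less
  show ?case
  proof (cases "card A \<le> 1")
    case True
    then show ?thesis
      by (intro exI[of _ "{}"]) (auto simp: covered_edges_def)
  next
    case False
    then obtain e1 e2 where e12: "e1 \<in> A" "e2 \<in> A" "e1 \<noteq> e2"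
      using card_le_Suc0_iff_eq[OF less.prems(1)] by auto
    obtain x y where xy: "x \<in> V" "y \<in> V" "e1 = {v, x}" "e2 = {v, y}"
      using less.prems(2) e12(1,2) by meson
    let ?A = "A - {e1, e2}"
    have card_A: "card ?A + 2 = card A"
      using e12 less.prems(1) False by (simp add: card_Diff_subset)
    then have parity: "card ?A mod 2 = card A mod 2"
      by (simp flip: card_A)
    obtain Os where Os: "finite Os" "Os \<subseteq> inversion_sets 3 V" "2 * card Os + card ?A mod 2 \<le> card ?A"
        "card (?A - covered_edges ?A Os) \<le> card ?A mod 2"
      using less.hyps[of ?A] less.prems card_A by auto
    let ?Q = "{v, x, y}"
    have Q: "?Q \<in> inversion_sets 3 V"
      using xy assms(2) unfolding inversion_sets_def by (simp add: card_insert_if)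
    have card_Os: "2 * card (insert ?Q Os) + card A mod 2 \<le> card A"
      using Os(1,3) card_A parity card_insert_le[of Os ?Q] by (simp add: card_insert_if)
    have "A - covered_edges A (insert ?Q Os) \<subseteq> ?A - covered_edges ?A Os"
      using xy unfolding covered_edges_def by auto
    then have "card (A - covered_edges A (insert ?Q Os)) \<le> card (?A - covered_edges ?A Os)"
      using less.prems(1) by (intro card_mono) auto
    with Os(4) parity have "card (A - covered_edges A (insert ?Q Os)) \<le> card A mod 2"
      by linarith
    with Q card_Os show ?thesis
      using Os(1,2) by (intro exI[of _ "insert ?Q Os"]) auto
  qed
qed

lemma head_map_star_triangle_cover:
  assumes "simple_graph V E" "\<forall>e \<in> E. h e \<in> e" "v \<in> V"
  shows "\<exists>Os. finite Os \<and> Os \<subseteq> inversion_sets 3 V \<and> 2 * card Os + indeg E h v mod 2 \<le> indeg E h v \<and>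
    card ({e \<in> E. h e = v} - covered_edges {e \<in> E. h e = v} Os) \<le> indeg E h v mod 2"
  unfolding indeg_def
proof (rule star_triangle_cover)
  show "finite {e \<in> E. h e = v}"
    using simple_graph_finite_edges[OF assms(1)] by simp
  show "\<forall>e \<in> {e \<in> E. h e = v}. \<exists>x \<in> V. e = {v, x}"
    using simple_graph_edge_at[OF assms(1)] assms(2) by blast
qed (rule assms(3))

lemma card_edges_eq_sum_indeg:
  assumes "simple_graph V E" "\<forall>e \<in> E. h e \<in> e"
  shows "card E = (\<Sum>v \<in> V. indeg E h v)"
proof -
  have "finite V" "finite E"
    using assms(1) simple_graph_finite_edges unfolding simple_graph_def by blast+
  have "h e \<in> V" if "e \<in> E" for e
    using simple_graph_edge_subset[OF assms(1) that] assms(2) that by blast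
  then have "E = (\<Union>v \<in> V. {e \<in> E. h e = v})"
    by blast
  moreover have "card (\<Union>v \<in> V. {e \<in> E. h e = v}) = (\<Sum>v \<in> V. card {e \<in> E. h e = v})"
    using \<open>finite V\<close> \<open>finite E\<close> by (intro card_UN_disjoint) auto
  ultimately show ?thesis
    unfolding indeg_def by simp
qed

lemma sum_mod_2_eq_card_odd:
  fixes f :: "'a \<Rightarrow> nat"
  assumes "finite A"
  shows "(\<Sum>x \<in> A. f x mod 2) = card {x \<in> A. odd (f x)}"
proof -
  have "(\<Sum>x \<in> A. f x mod 2) = (\<Sum>x \<in> A. if odd (f x) then 1 else 0)"
    by (intro sum.cong) presburger+
  also have "\<dots> = card {x \<in> A. odd (f x)}"
    using sum.inter_filter[OF assms, of "\<lambda>_. 1 :: nat" "\<lambda>x. odd (f x)"] by simp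
  finally show ?thesis .
qed

lemma head_map_triangle_cover:
  assumes "simple_graph V E" "\<forall>e \<in> E. h e \<in> e"
  shows "\<exists>Os. finite Os \<and> Os \<subseteq> inversion_sets 3 V \<and>
    card (E - covered_edges E Os) \<le> card {v \<in> V. odd (indeg E h v)} \<and>
    2 * card Os + card (E - covered_edges E Os) \<le> card E"
proof -
  let ?A = "\<lambda>v. {e \<in> E. h e = v}"
  have fin: "finite V" "finite E"
    using assms(1) simple_graph_finite_edges unfolding simple_graph_def by blast+
  have "\<forall>v \<in> V. \<exists>Os. finite Os \<and> Os \<subseteq> inversion_sets 3 V \<and>
      2 * card Os + indeg E h v mod 2 \<le> indeg E h v \<and>
      card (?A v - covered_edges (?A v) Os) \<le> indeg E h v mod 2"
    using head_map_star_triangle_cover[OF assms] by blast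
  then obtain Ov where Ov: "\<forall>v \<in> V. finite (Ov v) \<and> Ov v \<subseteq> inversion_sets 3 V \<and>
      2 * card (Ov v) + indeg E h v mod 2 \<le> indeg E h v \<and>
      card (?A v - covered_edges (?A v) (Ov v)) \<le> indeg E h v mod 2"
    by (rule bchoice[elim_format]) blast
  define Os where "Os = (\<Union>v \<in> V. Ov v)"
  have "E - covered_edges E Os \<subseteq> (\<Union>v \<in> V. ?A v - covered_edges (?A v) (Ov v))"
  proof
    fix e assume e: "e \<in> E - covered_edges E Os"
    then have "h e \<in> V"
      using simple_graph_edge_subset[OF assms(1)] assms(2) by blast
    with e show "e \<in> (\<Union>v \<in> V. ?A v - covered_edges (?A v) (Ov v))"
      unfolding covered_edges_def Os_def by blast
  qed
  then have "card (E - covered_edges E Os) \<le> card (\<Union>v \<in> V. ?A v - covered_edges (?A v) (Ov v))"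
    by (rule card_mono[rotated]) (rule finite_subset[OF _ fin(2)], blast)
  also have "\<dots> \<le> (\<Sum>v \<in> V. card (?A v - covered_edges (?A v) (Ov v)))"
    by (rule card_UN_le[OF fin(1)])
  also have "\<dots> \<le> (\<Sum>v \<in> V. indeg E h v mod 2)"
    using Ov by (intro sum_mono) blast
  finally have uncovered: "card (E - covered_edges E Os) \<le> (\<Sum>v \<in> V. indeg E h v mod 2)" .
  have "2 * card Os \<le> (\<Sum>v \<in> V. 2 * card (Ov v))"
    unfolding Os_def sum_distrib_left[symmetric] using card_UN_le[OF fin(1)] by simp
  moreover have "(\<Sum>v \<in> V. 2 * card (Ov v) + indeg E h v mod 2) \<le> (\<Sum>v \<in> V. indeg E h v)"
    using Ov by (intro sum_mono) blast
  moreover have "finite Os" "Os \<subseteq> inversion_sets 3 V"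
    using Ov fin(1) unfolding Os_def by auto
  ultimately show ?thesis
    using uncovered sum_mod_2_eq_card_odd[OF fin(1)] card_edges_eq_sum_indeg[OF assms]
    by (intro exI[of _ Os]) (auto simp: sum.distrib)
qed

lemma inv_dist_le:
  assumes "transformable p V D1 D2 k"
  shows "inv_dist p V D1 D2 \<le> k"
  unfolding inv_dist_def using assms by (rule Least_le)

lemma inv_diam_le:
  assumes "orientation E D"
    and "\<And>D1 D2. orientation E D1 \<Longrightarrow> orientation E D2 \<Longrightarrow> inv_dist p V D1 D2 \<le> b"
  shows "inv_diam p V E \<le> b"
  unfolding inv_diam_def
proof (rule Max.boundedI)
  let ?S = "{inv_dist p V D1 D2 | D1 D2. orientation E D1 \<and> orientation E D2}"
  have "?S \<subseteq> {..b}"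
    using assms(2) by blast
  then show "finite ?S"
    using finite_subset by blast
  show "?S \<noteq> {}"
    using assms(1) by blast
qed (use assms(2) in blast)

lemma inv_dist_3_le:
  assumes "connected_graph V E" "orientation E D1" "orientation E D2"
  shows "4 * inv_dist 3 V D1 D2 \<le> 3 * card E + 1"
proof -
  let ?F = "{{u, v} | u v. (u, v) \<in> D1 \<and> (u, v) \<notin> D2}"
  have sg: "simple_graph V E"
    using assms(1) unfolding connected_graph_def by blast
  have arcs: "\<forall>(u, v) \<in> D1. {u, v} \<in> E" and FE: "?F \<subseteq> E"
    using assms(2) unfolding orientation_def by auto
  obtain h where h: "\<forall>e \<in> E. h e \<in> e" "card {v \<in> V. odd (indeg E h v)} \<le> 1"
    using head_map_odd_indeg_le_1[OF assms(1)] by blast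
  obtain Os where Os: "finite Os" "Os \<subseteq> inversion_sets 3 V"
      "card (E - covered_edges E Os) \<le> card {v \<in> V. odd (indeg E h v)}"
      "2 * card Os + card (E - covered_edges E Os) \<le> card E"
    using head_map_triangle_cover[OF sg h(1)] by blast
  let ?C = "covered_edges E Os"
  have "2 \<le> (3 :: nat)" by simp
  from realize_edge_set_averaging[OF sg this Os(1,2) FE]
  obtain Xs where Xs: "set Xs \<subseteq> inversion_sets 3 V" "inverted_edges E Xs = ?F"
      "2 * length Xs \<le> card Os + card ?C + 2 * card (?F - ?C)"
    by blast
  have "foldl invert D1 Xs = flip_arcs D1 ?F"
    using foldl_invert_eq_flip_arcs[OF arcs] Xs(2) by simp
  also have "\<dots> = D2"
    using orientation_eq_flip_arcs[OF sg assms(2,3)] by simp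
  finally have "transformable 3 V D1 D2 (length Xs)"
    using Xs(1) unfolding transformable_def inversion_sets_def by blast
  then have "inv_dist 3 V D1 D2 \<le> length Xs"
    by (rule inv_dist_le)
  moreover have "?C \<subseteq> E"
    unfolding covered_edges_def by blast
  then have "card ?C + card (E - ?C) = card E"
    using simple_graph_finite_edges[OF sg] by (simp add: card_Diff_subset card_mono finite_subset)
  moreover have "card (?F - ?C) \<le> card (E - ?C)"
    using FE simple_graph_finite_edges[OF sg] by (intro card_mono) auto
  ultimately show ?thesis
    using Xs(3) Os(3,4) h(2) by linarith
qed

lemma le_ceiling_three_quarters:
  fixes n m :: nat
  assumes "4 * n \<le> 3 * m + 1"
  shows "int n \<le> \<lceil>3 * real m / 4\<rceil>"
proof -
  have "real n - 1 < 3 * real m / 4"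
    using assms by linarith
  then show ?thesis
    by (simp add: le_ceiling_iff)
qed

theorem mainTheorem4:
  fixes V :: "'a set" and E :: "'a set set"
  assumes "connected_graph V E"
  shows "int (inv_diam 3 V E) \<le> ceiling (3 * real (card E) / 4)"
proof -
  have sg: "simple_graph V E"
    using assms unfolding connected_graph_def by blast
  obtain h where "\<forall>e \<in> E. h e \<in> e"
    using simple_graph_head_map_exists[OF sg] by blast
  then have "orientation E {(u, v). {u, v} \<in> E \<and> h {u, v} = v}"
    by (rule orientation_of_head_map)
  moreover have "inv_dist 3 V D1 D2 \<le> (3 * card E + 1) div 4"
    if "orientation E D1" "orientation E D2" for D1 D2
    using inv_dist_3_le[OF assms that] by presburger
  ultimately have "inv_diam 3 V E \<le> (3 * card E + 1) div 4"
    by (rule inv_diam_le)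
  then have "4 * inv_diam 3 V E \<le> 3 * card E + 1"
    by presburger
  then show ?thesis
    by (rule le_ceiling_three_quarters)
qed

end
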